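(* Let $\mathscr T$ be a leafless, locally finite rooted directed tree, $q\geqslant1$, and let $\mathscr H_q$ be the Dirichlet space associated with $\mathscr T$. Then $\mathscr H_q$ has the complete Pick property, i.e. $\kappa_{\mathscr H_q}(z,w)$ is invertible for all $z,w\in\mathbb D$ and there is a positive definite function $F:\mathbb D\times\mathbb D\to B(E)$ with $I_E-\kappa_{\mathscr H_q}(z,w)^{-1}=F(z,w)$ for all $z,w\in\mathbb D$.
   Context: A directed tree $\mathscr T=(V,\mathcal E)$ is a directed graph with no circuits, connected, in which every non-root vertex has a unique parent; rooted means a unique vertex $\mathsf{root}$ has no parent. $\mathsf{Chi}(v)=\{u:(v,u)\in\mathcal E\}$; $\mathsf{Chi}^{\langle n\rangle}$ is the $n$-fold iterate. Locally finite: each $\mathsf{Chi}(v)$ finite; leafless: each $\mathsf{Chi}(v)$ nonempty; $V$ countably infinite. Depth $n_v$: the unique $n$ with $v\in\mathsf{Chi}^{\langle n\rangle}(\mathsf{root})$. Branching vertices $V_\prec=\{v:\mathrm{card}(\mathsf{Chi}(v))\geqslant2\}$. For $v\in V_\prec$, $\boldsymbol\lambda^v\in\ell^2(\mathsf{Chi}(v))$ is the constant function $\boldsymbol\lambda^v(u)=\frac{1}{\sqrt{\mathrm{card}(\mathsf{Chi}(v))}}\sqrt{\frac{n_v+q}{n_v+1}}$. Let $E=\langle e_{\mathsf{root}}\rangle\oplus\bigoplus_{v\in V_\prec}\big(\ell^2(\mathsf{Chi}(v))\ominus\langle\boldsymbol\lambda^v\rangle\big)\subseteq\ell^2(V)$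 and $I_E$ its identity. The Dirichlet space $\mathscr H_q$ is the reproducing kernel Hilbert space of $E$-valued holomorphic functions on $\mathbb D$ with kernel $\kappa_{\mathscr H_q}(z,w)=\sum_{n\ge0}\frac{(1)_n}{(q)_n}z^n\overline w^nP_{\langle e_{\mathsf{root}}\rangle}+\sum_{v\in V_\prec}\sum_{n\ge0}\frac{(n_v+2)_n}{(n_v+q+1)_n}z^n\overline w^nP_{\ell^2(\mathsf{Chi}(v))\ominus\langle\boldsymbol\lambda^v\rangle}$, with $P_{\mathcal M}$ the orthogonal projection of $E$ onto $\mathcal M$ and $(x)_n=\Gamma(x+n)/\Gamma(x)$. A function $F:\mathbb D\times\mathbb D\to B(E)$ is positive definite if $\sum_{i,j}\langle F(z_i,z_j)g_j,g_i\rangle\geqslant0$ for all finite families $z_i\in\mathbb D$, $g_i\in E$. *)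

theory Defs
  imports "HOL-Analysis.Analysis"
begin

definition Chi :: "('v \<times> 'v) set \<Rightarrow> 'v \<Rightarrow> 'v set" where
  "Chi Ed v = {u. (v, u) \<in> Ed}"

definition rooted_directed_tree :: "'v set \<Rightarrow> ('v \<times> 'v) set \<Rightarrow> 'v \<Rightarrow> bool" where
  "rooted_directed_tree V Ed r \<longleftrightarrow>
     Ed \<subseteq> V \<times> V \<and> r \<in> V \<and> acyclic Ed \<and>
     (\<forall>u\<in>V. \<forall>v\<in>V. (u, v) \<in> (Ed \<union> Ed\<inverse>)\<^sup>*) \<and>
     (\<forall>v\<in>V. v \<noteq> r \<longrightarrow> (\<exists>!u. (u, v) \<in> Ed)) \<and>
     (\<forall>u. (u, r) \<notin> Ed)"

definition locally_finite_tree :: "'v set \<Rightarrow> ('v \<times> 'v) set \<Rightarrow> bool" where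
  "locally_finite_tree V Ed \<longleftrightarrow> (\<forall>v\<in>V. finite (Chi Ed v))"

definition leafless_tree :: "'v set \<Rightarrow> ('v \<times> 'v) set \<Rightarrow> bool" where
  "leafless_tree V Ed \<longleftrightarrow> (\<forall>v\<in>V. Chi Ed v \<noteq> {})"

definition depth :: "('v \<times> 'v) set \<Rightarrow> 'v \<Rightarrow> 'v \<Rightarrow> nat" where
  "depth Ed r v = (THE n. (r, v) \<in> Ed ^^ n)"

definition branching :: "'v set \<Rightarrow> ('v \<times> 'v) set \<Rightarrow> 'v set" where
  "branching V Ed = {v \<in> V. card (Chi Ed v) \<ge> 2}"

definition lam :: "('v \<times> 'v) set \<Rightarrow> 'v \<Rightarrow> real \<Rightarrow> 'v \<Rightarrow> 'v \<Rightarrow> complex" where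
  "lam Ed r q v u = (if u \<in> Chi Ed v then
      complex_of_real (1 / sqrt (real (card (Chi Ed v)))
        * sqrt ((real (depth Ed r v) + q) / (real (depth Ed r v) + 1)))
     else 0)"

definition l2space :: "'v set \<Rightarrow> ('v \<Rightarrow> complex) set" where
  "l2space V = {g. (\<forall>u. u \<notin> V \<longrightarrow> g u = 0) \<and> (\<lambda>u. (cmod (g u))\<^sup>2) summable_on UNIV}"

definition l2_inner :: "('v \<Rightarrow> complex) \<Rightarrow> ('v \<Rightarrow> complex) \<Rightarrow> complex" where
  "l2_inner f g = (\<Sum>\<^sub>\<infinity>u. f u * cnj (g u))"

definition l2_norm :: "('v \<Rightarrow> complex) \<Rightarrow> real" where
  "l2_norm g = sqrt (\<Sum>\<^sub>\<infinity>u. (cmod (g u))\<^sup>2)"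

definition P_root :: "'v \<Rightarrow> ('v \<Rightarrow> complex) \<Rightarrow> ('v \<Rightarrow> complex)" where
  "P_root r g = (\<lambda>u. if u = r then g r else 0)"

definition P_block :: "('v \<times> 'v) set \<Rightarrow> 'v \<Rightarrow> real \<Rightarrow> 'v \<Rightarrow> ('v \<Rightarrow> complex) \<Rightarrow> ('v \<Rightarrow> complex)" where
  "P_block Ed r q v g = (\<lambda>u. if u \<in> Chi Ed v then
      g u - (l2_inner g (lam Ed r q v) / l2_inner (lam Ed r q v) (lam Ed r q v)) * lam Ed r q v u
     else 0)"

text \<open>The space E: the closed orthogonal direct sum of the blocks, i.e. those
  elements of l^2(V) that coincide with the sum of their projections onto the
  (mutually orthogonal) blocks.\<close>
definition Espace :: "'v set \<Rightarrow> ('v \<times> 'v) set \<Rightarrow> 'v \<Rightarrow> real \<Rightarrow> ('v \<Rightarrow> complex) set" where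
  "Espace V Ed r q = {g \<in> l2space V.
      \<forall>u. g u = P_root r g u + (\<Sum>\<^sub>\<infinity>v\<in>branching V Ed. P_block Ed r q v g u)}"

definition k_root :: "real \<Rightarrow> complex \<Rightarrow> complex" where
  "k_root q x = (\<Sum>n. complex_of_real (pochhammer 1 n / pochhammer q n) * x ^ n)"

definition k_vert :: "real \<Rightarrow> nat \<Rightarrow> complex \<Rightarrow> complex" where
  "k_vert q m x = (\<Sum>n. complex_of_real (pochhammer (real m + 2) n / pochhammer (real m + q + 1) n) * x ^ n)"

definition dirichlet_kernel ::
  "'v set \<Rightarrow> ('v \<times> 'v) set \<Rightarrow> 'v \<Rightarrow> real \<Rightarrow> complex \<Rightarrow> complex \<Rightarrow> ('v \<Rightarrow> complex) \<Rightarrow> ('v \<Rightarrow> complex)" where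
  "dirichlet_kernel V Ed r q z w g = (\<lambda>u.
      k_root q (z * cnj w) * P_root r g u
      + (\<Sum>\<^sub>\<infinity>v\<in>branching V Ed. k_vert q (depth Ed r v) (z * cnj w) * P_block Ed r q v g u))"

definition bounded_op_on :: "('v \<Rightarrow> complex) set \<Rightarrow> (('v \<Rightarrow> complex) \<Rightarrow> ('v \<Rightarrow> complex)) \<Rightarrow> bool" where
  "bounded_op_on E T \<longleftrightarrow>
     (\<forall>g\<in>E. T g \<in> E) \<and>
     (\<forall>a b g h. g \<in> E \<longrightarrow> h \<in> E \<longrightarrow> T (\<lambda>u. a * g u + b * h u) = (\<lambda>u. a * T g u + b * T h u)) \<and>
     (\<exists>C. \<forall>g\<in>E. l2_norm (T g) \<le> C * l2_norm g)"

definition invertible_op_on ::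
  "('v \<Rightarrow> complex) set \<Rightarrow> (('v \<Rightarrow> complex) \<Rightarrow> ('v \<Rightarrow> complex)) \<Rightarrow> (('v \<Rightarrow> complex) \<Rightarrow> ('v \<Rightarrow> complex)) \<Rightarrow> bool" where
  "invertible_op_on E T G \<longleftrightarrow> bounded_op_on E G \<and> (\<forall>g\<in>E. G (T g) = g \<and> T (G g) = g)"

definition positive_definite_on ::
  "('v \<Rightarrow> complex) set \<Rightarrow> (complex \<Rightarrow> complex \<Rightarrow> ('v \<Rightarrow> complex) \<Rightarrow> ('v \<Rightarrow> complex)) \<Rightarrow> bool" where
  "positive_definite_on E F \<longleftrightarrow>
     (\<forall>(m::nat) (z::nat \<Rightarrow> complex) (g::nat \<Rightarrow> 'v \<Rightarrow> complex).
        (\<forall>i<m. z i \<in> ball 0 1 \<and> g i \<in> E) \<longrightarrow>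
        (let s = (\<Sum>i<m. \<Sum>j<m. l2_inner (F (z i) (z j) (g j)) (g i)) in Im s = 0 \<and> Re s \<ge> 0))"

end

theory Submission
  imports Defs
begin

(*
  On E the Dirichlet kernel is block diagonal: on the root block it is the scalar kernel
  k(z cnj w) with coefficients (1)_n/(q)_n, on the block of a branching vertex v the scalar
  kernel with coefficients (n_v+2)_n/(n_v+q+1)_n. Both coefficient sequences have the form
  (s)_n/(t)_n with 0 < s <= t, so they are log-convex, and Kaluza's lemma gives 1/k = 1 - c
  for a power series c with coefficients in [0, 1]. Hence the kernel is invertible with
  block-diagonal inverse 1 - c(z cnj w), and I - kappa(z, w)^-1 multiplies every block by
  c(z cnj w) = sum c_n z^n (cnj w)^n, a sum of the positive rank-one kernels c_n z^n (cnj w)^n.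
*)

section \<open>Kaluza's lemma\<close>

context
  fixes a \<rho> :: "nat \<Rightarrow> real"
  assumes a_0: "a 0 = 1"
    and a_Suc: "\<And>n. a (Suc n) = a n * \<rho> n"
    and \<rho>_pos: "\<And>n. 0 < \<rho> n"
    and \<rho>_mono: "mono \<rho>"
begin

lemma log_convex_seq_pos: "0 < a n"
  by (induction n) (simp_all add: a_0 a_Suc \<rho>_pos)

lemma log_convex_seq_cross_le:
  assumes "j \<le> m"
  shows "a (Suc j) * a m \<le> a (Suc m) * a j"
proof -
  have "a j * a m * \<rho> j \<le> a j * a m * \<rho> m"
    using \<rho>_mono assms log_convex_seq_pos[of j] log_convex_seq_pos[of m]
    by (intro mult_left_mono) (auto dest: monoD)
  then show ?thesis
    by (simp add: a_Suc algebra_simps)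
qed

lemma inverse_fps_convolution:
  "(\<Sum>i=0..n. fps_nth (inverse (Abs_fps a)) i * a (n - i)) = (if n = 0 then 1 else 0)"
proof -
  have "inverse (Abs_fps a) * Abs_fps a = 1"
    using a_0 by (intro inverse_mult_eq_1) simp
  then have "fps_nth (inverse (Abs_fps a) * Abs_fps a) n = fps_nth 1 n"
    by simp
  then show ?thesis
    by (simp add: fps_mult_nth)
qed

theorem kaluza_inverse_fps_nonpos:
  "1 \<le> n \<Longrightarrow> fps_nth (inverse (Abs_fps a)) n \<le> 0"
proof (induction n rule: less_induct)
  case (less n)
  define b where "b = fps_nth (inverse (Abs_fps a))"
  have b_0: "b 0 = 1"
    by (simp add: b_def a_0)
  obtain m where n: "n = Suc m"
    using less.prems by (cases n) auto
  define S where "S = (\<Sum>i=0..m. b i * a (Suc m - i))"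
  \<comment> \<open>Compare the convolution identity at m termwise with S, using log-convexity and the
     induction hypothesis b i \<le> 0 for 0 < i \<le> m.\<close>
  have "a (Suc m) * (\<Sum>i=0..m. b i * a (m - i)) \<le> a m * S"
    unfolding S_def sum_distrib_left
  proof (rule sum_mono)
    fix i assume i: "i \<in> {0..m}"
    show "a (Suc m) * (b i * a (m - i)) \<le> a m * (b i * a (Suc m - i))"
    proof (cases "i = 0")
      case False
      have "a (Suc (m - i)) * a m \<le> a (Suc m) * a (m - i)"
        by (rule log_convex_seq_cross_le) simp
      moreover have "b i \<le> 0"
        using less.IH[of i] False i n by (auto simp: b_def)
      ultimately show ?thesis
        using i mult_left_mono_neg[of "a m * a (Suc (m - i))" "a (Suc m) * a (m - i)" "b i"]
        by (simp add: Suc_diff_le algebra_simps)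
    qed (simp add: b_0)
  qed
  moreover have "0 \<le> (\<Sum>i=0..m. b i * a (m - i))"
    using inverse_fps_convolution[of m] by (simp add: b_def)
  ultimately have "0 \<le> a m * S"
    using log_convex_seq_pos[of "Suc m"] by (meson mult_nonneg_nonneg less_imp_le order_trans)
  then have "0 \<le> S"
    using log_convex_seq_pos[of m] by (simp add: zero_le_mult_iff)
  moreover have "b (Suc m) + S = 0"
    using inverse_fps_convolution[of "Suc m"] a_0
    by (simp add: b_def S_def sum.atLeast0_atMost_Suc_shift)
  ultimately show ?case
    by (simp add: n b_def)
qed

lemma kaluza_inverse_fps_lower: "- a n \<le> fps_nth (inverse (Abs_fps a)) n"
proof (cases n)
  case (Suc m)
  have "(\<Sum>i=0..n. fps_nth (inverse (Abs_fps a)) i * a (n - i)) = 0"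
    using inverse_fps_convolution[of n] Suc by simp
  then have "a n + fps_nth (inverse (Abs_fps a)) n
      + (\<Sum>i=1..m. fps_nth (inverse (Abs_fps a)) i * a (n - i)) = 0"
    using a_0 Suc by (simp add: sum.atLeast0_atMost_Suc sum.atLeast_Suc_atMost[of 0 m])
  moreover have "(\<Sum>i=1..m. fps_nth (inverse (Abs_fps a)) i * a (n - i)) \<le> 0"
    using kaluza_inverse_fps_nonpos log_convex_seq_pos
    by (intro sum_nonpos) (simp add: mult_nonpos_nonneg less_imp_le)
  ultimately show ?thesis
    by linarith
qed (simp add: a_0)

end

section \<open>Real power series on the complex unit disc\<close>

definition of_real_fps :: "real fps \<Rightarrow> complex fps" where
  "of_real_fps f = Abs_fps (\<lambda>n. of_real (fps_nth f n))"

lemma of_real_fps_1 [simp]: "of_real_fps 1 = 1"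
  by (rule fps_ext) (simp add: of_real_fps_def)

lemma of_real_fps_0 [simp]: "of_real_fps 0 = 0"
  by (rule fps_ext) (simp add: of_real_fps_def)

lemma of_real_fps_diff: "of_real_fps (f - g) = of_real_fps f - of_real_fps g"
  by (rule fps_ext) (simp add: of_real_fps_def)

lemma of_real_fps_mult: "of_real_fps (f * g) = of_real_fps f * of_real_fps g"
  by (rule fps_ext) (simp add: of_real_fps_def fps_mult_nth)

lemma fps_conv_radius_of_real_fps [simp]: "fps_conv_radius (of_real_fps f) = fps_conv_radius f"
proof -
  have "fps_conv_radius (of_real_fps f) = conv_radius (\<lambda>n. norm (fps_nth (of_real_fps f) n))"
    by (simp add: fps_conv_radius_def)
  also have "\<dots> = conv_radius (\<lambda>n. norm (fps_nth f n))"
    by (simp add: of_real_fps_def)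
  also have "\<dots> = fps_conv_radius f"
    unfolding fps_conv_radius_def by (rule conv_radius_norm)
  finally show ?thesis .
qed

lemma summable_norm_eval_of_real_fps:
  fixes f :: "real fps"
  assumes "\<And>n. \<bar>fps_nth f n\<bar> \<le> 1" and "norm x < 1"
  shows "summable (\<lambda>n. norm (fps_nth (of_real_fps f) n * x ^ n))"
  using assms
  by (intro summable_comparison_test[OF _ summable_geometric[of "norm x"]])
     (auto simp: of_real_fps_def norm_mult norm_power mult_left_le_one_le)

lemma fps_conv_radius_ge_1:
  fixes f :: "real fps"
  assumes "\<And>n. \<bar>fps_nth f n\<bar> \<le> 1"
  shows "1 \<le> fps_conv_radius f"
proof -
  have "1 \<le> fps_conv_radius (of_real_fps f)"
    unfolding fps_conv_radius_def
  proof (rule conv_radius_geI_ex')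
    fix r :: real assume "0 < r" "ereal r < 1"
    then show "summable (\<lambda>n. fps_nth (of_real_fps f) n * of_real r ^ n)"
      using assms by (auto intro!: summable_norm_cancel[OF summable_norm_eval_of_real_fps])
  qed
  then show ?thesis
    by simp
qed

lemma norm_eval_of_real_fps_le:
  fixes f :: "real fps"
  assumes "\<And>n. \<bar>fps_nth f n\<bar> \<le> 1" and "norm x < 1"
  shows "norm (eval_fps (of_real_fps f) x) \<le> 1 / (1 - norm x)"
proof -
  have "norm (eval_fps (of_real_fps f) x) \<le> (\<Sum>n. norm (fps_nth (of_real_fps f) n * x ^ n))"
    unfolding eval_fps_def by (rule summable_norm[OF summable_norm_eval_of_real_fps[OF assms]])
  also have "\<dots> \<le> (\<Sum>n. norm x ^ n)"
    using assms
    by (intro suminf_le summable_norm_eval_of_real_fps summable_geometric)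
       (auto simp: of_real_fps_def norm_mult norm_power mult_left_le_one_le)
  also have "\<dots> = 1 / (1 - norm x)"
    using assms(2) by (simp add: suminf_geometric)
  finally show ?thesis .
qed

lemma eval_of_real_fps_one_minus:
  assumes "1 \<le> fps_conv_radius f" and "norm x < 1"
  shows "eval_fps (of_real_fps (1 - f)) x = 1 - eval_fps (of_real_fps f) x"
  using assms less_le_trans[of "ereal (norm x)" 1] by (simp add: of_real_fps_diff eval_fps_diff)

text \<open>A scalar kernel f(z cnj w) is a complete Pick kernel when 1/f = 1 - c with c having
  nonnegative coefficients. The bounds by 1 make all series involved converge on the unit
  disc, with estimates that do not depend on f.\<close>

definition pick_fps :: "real fps \<Rightarrow> bool" where
  "pick_fps f \<longleftrightarrow> fps_nth f 0 = 1 \<and> (\<forall>n. \<bar>fps_nth f n\<bar> \<le> 1) \<and>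
     (\<forall>n. 0 \<le> fps_nth (1 - inverse f) n \<and> fps_nth (1 - inverse f) n \<le> 1)"

lemma pick_fps_coeff_bounds:
  assumes "pick_fps f"
  shows "\<bar>fps_nth f n\<bar> \<le> 1" and "\<bar>fps_nth (inverse f) n\<bar> \<le> 1"
    and "0 \<le> fps_nth (1 - inverse f) n" and "fps_nth (1 - inverse f) n \<le> 1"
proof -
  have f_0: "fps_nth f 0 = 1"
    and c: "0 \<le> fps_nth (1 - inverse f) n" "fps_nth (1 - inverse f) n \<le> 1"
    using assms by (simp_all add: pick_fps_def)
  then show "0 \<le> fps_nth (1 - inverse f) n" "fps_nth (1 - inverse f) n \<le> 1"
    by simp_all
  show "\<bar>fps_nth (inverse f) n\<bar> \<le> 1"
  proof (cases "n = 0")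
    case False
    then show ?thesis
      using c by simp
  qed (simp add: f_0)
  show "\<bar>fps_nth f n\<bar> \<le> 1"
    using assms by (simp add: pick_fps_def)
qed

lemma pick_fps_eval_inverse:
  assumes f: "pick_fps f" and x: "norm x < 1"
  shows "eval_fps (of_real_fps f) x * eval_fps (of_real_fps (inverse f)) x = 1"
proof -
  have "1 \<le> fps_conv_radius f" "1 \<le> fps_conv_radius (inverse f)"
    using pick_fps_coeff_bounds[OF f] by (simp_all add: fps_conv_radius_ge_1)
  then have "norm x < fps_conv_radius f" "norm x < fps_conv_radius (inverse f)"
    using x less_le_trans[of "ereal (norm x)" 1] by simp_all
  then show ?thesis
    using f by (simp add: eval_fps_mult[symmetric] of_real_fps_mult[symmetric] inverse_mult_eq_1'
        pick_fps_def)
qed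

lemma pick_fps_pochhammer_ratio:
  fixes s t :: real
  assumes s: "0 < s" and st: "s \<le> t"
  shows "pick_fps (Abs_fps (\<lambda>n. pochhammer s n / pochhammer t n))"
proof -
  define a where "a n = pochhammer s n / pochhammer t n" for n
  define \<rho> where "\<rho> n = (s + real n) / (t + real n)" for n
  have a_0: "a 0 = 1"
    by (simp add: a_def)
  have a_Suc: "a (Suc n) = a n * \<rho> n" for n
    using s st pochhammer_pos[of t n] by (simp add: a_def \<rho>_def pochhammer_Suc field_simps)
  have \<rho>_pos: "0 < \<rho> n" and \<rho>_le_1: "\<rho> n \<le> 1" for n
    using s st by (simp_all add: \<rho>_def)
  have \<rho>_mono: "mono \<rho>"
    using s st by (simp add: mono_iff_le_Suc \<rho>_def field_simps)
  note a_pos = log_convex_seq_pos[OF a_0 a_Suc \<rho>_pos \<rho>_mono]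
  have a_le_1: "a n \<le> 1" for n
    using a_pos
    by (induction n) (auto simp: a_0 a_Suc intro!: mult_le_one \<rho>_le_1 less_imp_le[OF \<rho>_pos])
  have "0 \<le> fps_nth (1 - inverse (Abs_fps a)) n \<and> fps_nth (1 - inverse (Abs_fps a)) n \<le> 1"
    for n
    using kaluza_inverse_fps_nonpos[OF a_0 a_Suc \<rho>_pos \<rho>_mono, of n]
      kaluza_inverse_fps_lower[OF a_0 a_Suc \<rho>_pos \<rho>_mono, of n] a_le_1[of n] a_0
    by (cases n) auto
  moreover have "\<bar>a n\<bar> \<le> 1" for n
    using a_le_1 a_pos by (simp add: less_imp_le)
  ultimately show ?thesis
    using a_0 by (simp add: pick_fps_def a_def[abs_def])
qed

section \<open>Square-summable functions\<close>

lemma norm_add_squared_le: "(norm (x + y))\<^sup>2 \<le> 2 * (norm x)\<^sup>2 + 2 * (norm y)\<^sup>2"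
proof -
  have "(norm (x + y))\<^sup>2 \<le> (norm x + norm y)\<^sup>2"
    by (simp add: norm_triangle_ineq power_mono)
  also have "\<dots> \<le> 2 * (norm x)\<^sup>2 + 2 * (norm y)\<^sup>2"
    using zero_le_power2[of "norm x - norm y"] by (simp add: power2_sum power2_diff)
  finally show ?thesis .
qed

lemma l2space_add:
  assumes g: "g \<in> l2space V" and h: "h \<in> l2space V"
  shows "(\<lambda>u. g u + h u) \<in> l2space V"
proof -
  have "(\<lambda>u. 2 * (cmod (g u))\<^sup>2 + 2 * (cmod (h u))\<^sup>2) summable_on UNIV"
    using g h by (intro summable_on_add summable_on_cmult_right) (simp_all add: l2space_def)
  then have "(\<lambda>u. (cmod (g u + h u))\<^sup>2) summable_on UNIV"
    by (rule summable_on_comparison_test) (simp_all add: norm_add_squared_le)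
  then show ?thesis
    using g h by (simp add: l2space_def)
qed

lemma l2space_mult_bounded:
  assumes g: "g \<in> l2space V" and m: "\<And>u. cmod (m u) \<le> C"
  shows "(\<lambda>u. m u * g u) \<in> l2space V"
proof -
  have "(\<lambda>u. C\<^sup>2 * (cmod (g u))\<^sup>2) summable_on UNIV"
    using g by (intro summable_on_cmult_right) (simp add: l2space_def)
  then have "(\<lambda>u. (cmod (m u * g u))\<^sup>2) summable_on UNIV"
    by (rule summable_on_comparison_test)
       (simp_all add: norm_mult power_mult_distrib mult_right_mono power_mono[OF m])
  then show ?thesis
    using g by (simp add: l2space_def)
qed

lemma l2space_lincomb:
  "g \<in> l2space V \<Longrightarrow> h \<in> l2space V \<Longrightarrow> (\<lambda>u. a * g u + b * h u) \<in> l2space V"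
  using l2space_add l2space_mult_bounded[of _ V "\<lambda>_. _", OF _ order_refl] by blast

lemma l2_norm_mult_bounded_le:
  assumes g: "g \<in> l2space V" and m: "\<And>u. cmod (m u) \<le> C"
  shows "l2_norm (\<lambda>u. m u * g u) \<le> C * l2_norm g"
proof -
  have C: "0 \<le> C"
    using m[of undefined] norm_ge_zero order_trans by blast
  have "(\<Sum>\<^sub>\<infinity>u. (cmod (m u * g u))\<^sup>2) \<le> (\<Sum>\<^sub>\<infinity>u. C\<^sup>2 * (cmod (g u))\<^sup>2)"
    using l2space_mult_bounded[OF g m] g
    by (intro infsum_mono summable_on_cmult_right)
       (simp_all add: l2space_def norm_mult power_mult_distrib mult_right_mono power_mono[OF m])
  also have "\<dots> = C\<^sup>2 * (\<Sum>\<^sub>\<infinity>u. (cmod (g u))\<^sup>2)"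
    by (rule infsum_cmult_right')
  finally have "sqrt (\<Sum>\<^sub>\<infinity>u. (cmod (m u * g u))\<^sup>2) \<le> sqrt (C\<^sup>2 * (\<Sum>\<^sub>\<infinity>u. (cmod (g u))\<^sup>2))"
    by (rule real_sqrt_le_mono)
  then show ?thesis
    using C by (simp add: l2_norm_def real_sqrt_mult)
qed

lemma summable_on_l2_inner:
  assumes g: "g \<in> l2space V" and h: "h \<in> l2space V"
  shows "(\<lambda>u. g u * cnj (h u)) summable_on UNIV"
proof -
  have "(\<lambda>u. (cmod (g u))\<^sup>2 + (cmod (h u))\<^sup>2) summable_on UNIV"
    using g h by (intro summable_on_add) (simp_all add: l2space_def)
  moreover have "norm (g u * cnj (h u)) \<le> (cmod (g u))\<^sup>2 + (cmod (h u))\<^sup>2" for u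
  proof -
    have "2 * (cmod (g u) * cmod (h u)) \<le> (cmod (g u))\<^sup>2 + (cmod (h u))\<^sup>2"
      using zero_le_power2[of "cmod (g u) - cmod (h u)"] by (simp add: power2_diff)
    moreover have "0 \<le> cmod (g u) * cmod (h u)"
      by simp
    ultimately show ?thesis
      unfolding norm_mult complex_mod_cnj by linarith
  qed
  ultimately have "(\<lambda>u. norm (g u * cnj (h u))) summable_on UNIV"
    by (rule summable_on_comparison_test) simp
  then show ?thesis
    by (simp add: summable_on_iff_abs_summable_on_complex)
qed

lemma l2_inner_finite_support:
  assumes "finite S" and "\<And>u. u \<notin> S \<Longrightarrow> k u = 0"
  shows "l2_inner f k = (\<Sum>u\<in>S. f u * cnj (k u))"
proof -
  have "l2_inner f k = infsum (\<lambda>u. f u * cnj (k u)) S"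
    unfolding l2_inner_def by (rule infsum_cong_neutral) (use assms in auto)
  then show ?thesis
    using assms by simp
qed

lemma
  fixes f :: "'i \<Rightarrow> 'a \<Rightarrow> 'b::{topological_comm_monoid_add, t2_space}"
  assumes "finite I" and "\<And>i. i \<in> I \<Longrightarrow> f i summable_on A"
  shows summable_on_sum: "(\<lambda>x. \<Sum>i\<in>I. f i x) summable_on A"
    and infsum_sum: "(\<Sum>\<^sub>\<infinity>x\<in>A. \<Sum>i\<in>I. f i x) = (\<Sum>i\<in>I. infsum (f i) A)"
  using assms by (induction I rule: finite_induct) (simp_all add: summable_on_add infsum_add)

lemma
  fixes f :: "'i \<Rightarrow> 'j \<Rightarrow> 'a \<Rightarrow> 'b::{topological_comm_monoid_add, t2_space}"
  assumes I: "finite I" and J: "finite J" and f: "\<And>i j. i \<in> I \<Longrightarrow> j \<in> J \<Longrightarrow> f i j summable_on A"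
  shows summable_on_double_sum: "(\<lambda>x. \<Sum>i\<in>I. \<Sum>j\<in>J. f i j x) summable_on A"
    and infsum_double_sum:
      "(\<Sum>\<^sub>\<infinity>x\<in>A. \<Sum>i\<in>I. \<Sum>j\<in>J. f i j x) = (\<Sum>i\<in>I. \<Sum>j\<in>J. infsum (f i j) A)"
proof -
  have inner: "(\<lambda>x. \<Sum>j\<in>J. f i j x) summable_on A" if "i \<in> I" for i
    using J by (rule summable_on_sum) (rule f[OF that])
  with I show "(\<lambda>x. \<Sum>i\<in>I. \<Sum>j\<in>J. f i j x) summable_on A"
    by (rule summable_on_sum)
  have "(\<Sum>\<^sub>\<infinity>x\<in>A. \<Sum>i\<in>I. \<Sum>j\<in>J. f i j x) = (\<Sum>i\<in>I. \<Sum>\<^sub>\<infinity>x\<in>A. \<Sum>j\<in>J. f i j x)"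
    using I inner by (rule infsum_sum)
  also have "\<dots> = (\<Sum>i\<in>I. \<Sum>j\<in>J. infsum (f i j) A)"
    using J f by (intro sum.cong refl infsum_sum) auto
  finally show "(\<Sum>\<^sub>\<infinity>x\<in>A. \<Sum>i\<in>I. \<Sum>j\<in>J. f i j x) = (\<Sum>i\<in>I. \<Sum>j\<in>J. infsum (f i j) A)" .
qed

section \<open>Positive definite multiplication kernels\<close>

lemma norm_mult_cnj_less_1: "norm z < 1 \<Longrightarrow> norm w < 1 \<Longrightarrow> norm (z * cnj w) < 1"
  using mult_strict_mono'[of "norm z" 1 "norm w" 1] by (simp add: norm_mult)

lemma quadratic_form_power_kernel:
  fixes z c :: "nat \<Rightarrow> complex"
  shows "(\<Sum>i<m. \<Sum>j<m. (z i * cnj (z j)) ^ n * c j * cnj (c i))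
           = of_real ((cmod (\<Sum>j<m. cnj (z j) ^ n * c j))\<^sup>2)"
proof -
  have "(\<Sum>i<m. \<Sum>j<m. (z i * cnj (z j)) ^ n * c j * cnj (c i))
      = (\<Sum>i<m. z i ^ n * cnj (c i)) * (\<Sum>j<m. cnj (z j) ^ n * c j)"
    by (simp only: sum_product) (simp add: power_mult_distrib mult_ac)
  also have "\<dots> = cnj (\<Sum>j<m. cnj (z j) ^ n * c j) * (\<Sum>j<m. cnj (z j) ^ n * c j)"
    by simp
  also have "\<dots> = of_real ((cmod (\<Sum>j<m. cnj (z j) ^ n * c j))\<^sup>2)"
    by (simp only: complex_norm_square mult.commute)
  finally show ?thesis .
qed

lemma quadratic_form_fps_kernel_nonneg:
  fixes f :: "real fps" and z c :: "nat \<Rightarrow> complex"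
  assumes coeff: "\<And>n. 0 \<le> fps_nth f n" and radius: "1 \<le> fps_conv_radius f"
    and z: "\<And>i. i < m \<Longrightarrow> norm (z i) < 1"
  shows "\<exists>R\<ge>0. (\<Sum>i<m. \<Sum>j<m. eval_fps (of_real_fps f) (z i * cnj (z j)) * c j * cnj (c i))
                 = of_real R"
proof -
  define t where "t i j n = fps_nth (of_real_fps f) n * (z i * cnj (z j)) ^ n * (c j * cnj (c i))"
    for i j n
  define A where "A n = (\<Sum>j<m. cnj (z j) ^ n * c j)" for n
  have summable_series: "summable (\<lambda>n. fps_nth (of_real_fps f) n * (z i * cnj (z j)) ^ n)"
    if "i < m" "j < m" for i j
  proof -
    have "norm (z i * cnj (z j)) < 1"
      using z that by (simp add: norm_mult_cnj_less_1)
    then have "norm (z i * cnj (z j)) < fps_conv_radius (of_real_fps f)"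
      using radius less_le_trans[of "ereal (norm (z i * cnj (z j)))" 1] by simp
    then show ?thesis
      by (rule summable_fps)
  qed
  then have summable_t: "summable (t i j)" if "i < m" "j < m" for i j
    unfolding t_def using that by (intro summable_mult2)
  have t_sum: "(\<Sum>i<m. \<Sum>j<m. t i j n) = of_real (fps_nth f n * (cmod (A n))\<^sup>2)" for n
  proof -
    have "(\<Sum>i<m. \<Sum>j<m. t i j n)
        = of_real (fps_nth f n) * (\<Sum>i<m. \<Sum>j<m. (z i * cnj (z j)) ^ n * c j * cnj (c i))"
      by (simp add: t_def of_real_fps_def sum_distrib_left mult_ac)
    then show ?thesis
      by (simp add: quadratic_form_power_kernel A_def)
  qed
  have summable_real: "summable (\<lambda>n. fps_nth f n * (cmod (A n))\<^sup>2)"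
  proof -
    have "summable (\<lambda>n. \<Sum>i<m. \<Sum>j<m. t i j n)"
      using summable_t by (intro summable_sum) auto
    then show ?thesis
      by (simp only: t_sum summable_complex_of_real)
  qed
  have "(\<Sum>i<m. \<Sum>j<m. eval_fps (of_real_fps f) (z i * cnj (z j)) * c j * cnj (c i))
      = (\<Sum>i<m. \<Sum>j<m. suminf (t i j))"
  proof (intro sum.cong refl)
    fix i j assume "i \<in> {..<m}" "j \<in> {..<m}"
    then show "eval_fps (of_real_fps f) (z i * cnj (z j)) * c j * cnj (c i) = suminf (t i j)"
      unfolding t_def eval_fps_def mult.assoc[of _ "c j"]
      by (intro suminf_mult2 summable_series) auto
  qed
  also have "\<dots> = (\<Sum>i<m. \<Sum>n. \<Sum>j<m. t i j n)"
    using summable_t by (intro sum.cong refl suminf_sum[symmetric]) auto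
  also have "\<dots> = (\<Sum>n. \<Sum>i<m. \<Sum>j<m. t i j n)"
    using summable_t by (intro suminf_sum[symmetric] summable_sum) auto
  also have "\<dots> = (\<Sum>n. of_real (fps_nth f n * (cmod (A n))\<^sup>2))"
    by (simp only: t_sum)
  also have "\<dots> = of_real (\<Sum>n. fps_nth f n * (cmod (A n))\<^sup>2)"
    by (rule suminf_of_real[OF summable_real, symmetric])
  finally have "(\<Sum>i<m. \<Sum>j<m. eval_fps (of_real_fps f) (z i * cnj (z j)) * c j * cnj (c i))
      = of_real (\<Sum>n. fps_nth f n * (cmod (A n))\<^sup>2)" .
  moreover have "0 \<le> (\<Sum>n. fps_nth f n * (cmod (A n))\<^sup>2)"
    using summable_real coeff by (intro suminf_nonneg) auto
  ultimately show ?thesis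
    by blast
qed

lemma positive_definite_on_fps_multiplier:
  fixes f :: "'v \<Rightarrow> real fps" and E :: "('v \<Rightarrow> complex) set"
  assumes E: "E \<subseteq> l2space V"
    and coeff: "\<And>u n. 0 \<le> fps_nth (f u) n \<and> fps_nth (f u) n \<le> 1"
    and F: "\<And>z w g. z \<in> ball 0 1 \<Longrightarrow> w \<in> ball 0 1 \<Longrightarrow> g \<in> E \<Longrightarrow>
              F z w g = (\<lambda>u. eval_fps (of_real_fps (f u)) (z * cnj w) * g u)"
  shows "positive_definite_on E F"
  unfolding positive_definite_on_def Let_def
proof (intro allI impI)
  fix m :: nat and z :: "nat \<Rightarrow> complex" and g :: "nat \<Rightarrow> 'v \<Rightarrow> complex"
  assume zg: "\<forall>i<m. z i \<in> ball 0 1 \<and> g i \<in> E"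
  then have z: "\<And>i. i < m \<Longrightarrow> norm (z i) < 1" and g: "\<And>i. i < m \<Longrightarrow> g i \<in> l2space V"
    using E by auto
  have coeff_abs: "\<bar>fps_nth (f u) n\<bar> \<le> 1" for u n
    using coeff[of u n] by simp
  define T where
    "T i j = (\<lambda>u. eval_fps (of_real_fps (f u)) (z i * cnj (z j)) * g j u * cnj (g i u))" for i j
  have inner: "l2_inner (F (z i) (z j) (g j)) (g i) = infsum (T i j) UNIV"
    and summable_T: "T i j summable_on UNIV" if "i < m" "j < m" for i j
  proof -
    have x: "norm (z i * cnj (z j)) < 1"
      using z that by (simp add: norm_mult_cnj_less_1)
    have F_ij:
      "F (z i) (z j) (g j) = (\<lambda>u. eval_fps (of_real_fps (f u)) (z i * cnj (z j)) * g j u)"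
      using zg that by (intro F) auto
    show "l2_inner (F (z i) (z j) (g j)) (g i) = infsum (T i j) UNIV"
      by (simp add: F_ij T_def l2_inner_def)
    have "F (z i) (z j) (g j) \<in> l2space V"
      unfolding F_ij using g[OF that(2)] norm_eval_of_real_fps_le[OF coeff_abs x]
      by (rule l2space_mult_bounded)
    from summable_on_l2_inner[OF this g[OF that(1)]] show "T i j summable_on UNIV"
      by (simp add: F_ij T_def)
  qed
  define S where "S u = (\<Sum>i<m. \<Sum>j<m. T i j u)" for u
  have summable_S: "S summable_on UNIV"
    unfolding S_def by (rule summable_on_double_sum) (auto intro: summable_T)
  have sum_eq: "(\<Sum>i<m. \<Sum>j<m. l2_inner (F (z i) (z j) (g j)) (g i)) = infsum S UNIV"
    unfolding S_def by (subst infsum_double_sum) (auto simp: inner summable_T)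
  have S_real: "\<exists>R\<ge>0. S u = of_real R" for u
    unfolding S_def T_def
    using coeff fps_conv_radius_ge_1[OF coeff_abs] z
    by (intro quadratic_form_fps_kernel_nonneg) auto
  then have "Im (S u) = 0" and "0 \<le> Re (S u)" for u
    by (metis Im_complex_of_real Re_complex_of_real)+
  then have "Im (infsum S UNIV) = 0" and "0 \<le> Re (infsum S UNIV)"
    by (simp_all add: infsum_Im[OF summable_S, symmetric] infsum_Re[OF summable_S, symmetric]
        infsum_nonneg)
  then show "Im (\<Sum>i<m. \<Sum>j<m. l2_inner (F (z i) (z j) (g j)) (g i)) = 0 \<and>
      0 \<le> Re (\<Sum>i<m. \<Sum>j<m. l2_inner (F (z i) (z j) (g j)) (g i))"
    by (simp add: sum_eq)
qed

section \<open>Block-diagonal operators on E\<close>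

lemma invertible_op_on_unique:
  assumes G: "invertible_op_on E T G" and G': "invertible_op_on E T G'" and g: "g \<in> E"
  shows "G g = G' g"
proof -
  have G'g: "G' g \<in> E"
    using G' g by (simp add: invertible_op_on_def bounded_op_on_def)
  then have "G g = G (T (G' g))"
    using G' g by (simp add: invertible_op_on_def)
  also have "\<dots> = G' g"
    using G G'g by (simp add: invertible_op_on_def)
  finally show ?thesis .
qed

locale tree_dirichlet_space =
  fixes V :: "'v set" and Ed :: "('v \<times> 'v) set" and r :: 'v and q :: real
  assumes edges_subset: "Ed \<subseteq> V \<times> V"
    and root_no_parent: "\<And>u. (u, r) \<notin> Ed"
    and unique_parent: "\<And>v. v \<in> V \<Longrightarrow> v \<noteq> r \<Longrightarrow> \<exists>!u. (u, v) \<in> Ed"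
    and q_pos: "0 < q"
begin

abbreviation E :: "('v \<Rightarrow> complex) set" where
  "E \<equiv> Espace V Ed r q"

definition parent :: "'v \<Rightarrow> 'v" where
  "parent u = (THE v. (v, u) \<in> Ed)"

definition branch_children :: "'v set" where
  "branch_children = (\<Union>v\<in>branching V Ed. Chi Ed v)"

lemma parent_eq: "u \<in> Chi Ed v \<Longrightarrow> parent u = v"
  unfolding parent_def Chi_def
  using edges_subset root_no_parent unique_parent by (intro the_equality) blast+

lemma root_notin_Chi: "r \<notin> Chi Ed v"
  using root_no_parent by (simp add: Chi_def)

lemma root_notin_branch_children: "r \<notin> branch_children"
  by (simp add: branch_children_def root_notin_Chi)

lemma branch_childrenI: "v \<in> branching V Ed \<Longrightarrow> u \<in> Chi Ed v \<Longrightarrow> u \<in> branch_children"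
  by (auto simp: branch_children_def)

lemma branch_childrenE:
  assumes "u \<in> branch_children"
  shows "parent u \<in> branching V Ed" and "u \<in> Chi Ed (parent u)"
  using assms parent_eq by (auto simp: branch_children_def)

lemma finite_Chi_branching: "v \<in> branching V Ed \<Longrightarrow> finite (Chi Ed v)"
  by (auto simp: branching_def intro: card_ge_0_finite)

lemma Chi_branching_nonempty: "v \<in> branching V Ed \<Longrightarrow> Chi Ed v \<noteq> {}"
  by (auto simp: branching_def)

lemma infsum_branching_P_block:
  "(\<Sum>\<^sub>\<infinity>v\<in>branching V Ed. h v * P_block Ed r q v g u) =
     (if u \<in> branch_children then h (parent u) * P_block Ed r q (parent u) g u else 0)"
proof -
  have "(\<Sum>\<^sub>\<infinity>v\<in>branching V Ed. h v * P_block Ed r q v g u) =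
      (\<Sum>\<^sub>\<infinity>v\<in>(if u \<in> branch_children then {parent u} else {}). h v * P_block Ed r q v g u)"
    using parent_eq branch_childrenE branch_childrenI
    by (intro infsum_cong_neutral) (auto simp: P_block_def split: if_splits)
  then show ?thesis
    by simp
qed

lemma lam_nonzero:
  assumes "v \<in> branching V Ed" and "u \<in> Chi Ed v"
  shows "lam Ed r q v u \<noteq> 0"
  using assms q_pos by (simp add: lam_def branching_def)

lemma lam_vanishes: "u \<notin> Chi Ed v \<Longrightarrow> lam Ed r q v u = 0"
  by (simp add: lam_def)

lemma l2_inner_lam_self_nonzero:
  assumes v: "v \<in> branching V Ed"
  shows "l2_inner (lam Ed r q v) (lam Ed r q v) \<noteq> 0"
  using v q_pos Chi_branching_nonempty[OF v]
  by (simp add: l2_inner_finite_support[OF finite_Chi_branching[OF v] lam_vanishes] lam_def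
      branching_def)

lemma P_block_eq_self_iff:
  assumes "v \<in> branching V Ed" and "u \<in> Chi Ed v"
  shows "g u = P_block Ed r q v g u \<longleftrightarrow> l2_inner g (lam Ed r q v) = 0"
  using assms lam_nonzero l2_inner_lam_self_nonzero by (simp add: P_block_def)

lemma Espace_iff:
  "g \<in> E \<longleftrightarrow> g \<in> l2space V \<and> (\<forall>u. u \<noteq> r \<longrightarrow> u \<notin> branch_children \<longrightarrow> g u = 0) \<and>
     (\<forall>v\<in>branching V Ed. l2_inner g (lam Ed r q v) = 0)"
proof -
  have pointwise: "g u = P_root r g u + (\<Sum>\<^sub>\<infinity>v\<in>branching V Ed. P_block Ed r q v g u) \<longleftrightarrow>
      (u \<noteq> r \<longrightarrow> u \<notin> branch_children \<longrightarrow> g u = 0) \<and>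
      (u \<in> branch_children \<longrightarrow> l2_inner g (lam Ed r q (parent u)) = 0)" for u
    using infsum_branching_P_block[where h = "\<lambda>_. 1"] P_block_eq_self_iff[OF branch_childrenE]
      root_notin_branch_children
    by (auto simp: P_root_def)
  have "(\<forall>u\<in>branch_children. l2_inner g (lam Ed r q (parent u)) = 0) \<longleftrightarrow>
      (\<forall>v\<in>branching V Ed. l2_inner g (lam Ed r q v) = 0)"
    using branch_childrenE branch_childrenI parent_eq Chi_branching_nonempty by blast
  then show ?thesis
    unfolding Espace_def using pointwise by blast
qed

lemma l2_inner_lam_eq_sum:
  "v \<in> branching V Ed \<Longrightarrow> l2_inner g (lam Ed r q v) = (\<Sum>u\<in>Chi Ed v. g u * cnj (lam Ed r q v u))"
  by (rule l2_inner_finite_support[OF finite_Chi_branching lam_vanishes])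

lemma Espace_lincomb:
  assumes g: "g \<in> E" and h: "h \<in> E"
  shows "(\<lambda>u. a * g u + b * h u) \<in> E"
proof -
  have "l2_inner (\<lambda>u. a * g u + b * h u) (lam Ed r q v)
      = a * l2_inner g (lam Ed r q v) + b * l2_inner h (lam Ed r q v)"
    if "v \<in> branching V Ed" for v
    using that by (simp add: l2_inner_lam_eq_sum sum_distrib_left sum.distrib algebra_simps)
  then show ?thesis
    using g h by (simp add: Espace_iff l2space_lincomb)
qed

definition block_multiplier :: "'a::zero \<Rightarrow> (nat \<Rightarrow> 'a) \<Rightarrow> 'v \<Rightarrow> 'a" where
  "block_multiplier \<alpha> \<beta> u =
     (if u = r then \<alpha> else if u \<in> branch_children then \<beta> (depth Ed r (parent u)) else 0)"

lemma block_multiplier_Chi: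
  "v \<in> branching V Ed \<Longrightarrow> u \<in> Chi Ed v \<Longrightarrow> block_multiplier \<alpha> \<beta> u = \<beta> (depth Ed r v)"
  using root_notin_Chi[of v] branch_childrenI[of v u] parent_eq[of u v]
  by (auto simp: block_multiplier_def)

lemma block_multiplier_map:
  "h 0 = 0 \<Longrightarrow> h (block_multiplier \<alpha> \<beta> u) = block_multiplier (h \<alpha>) (\<lambda>n. h (\<beta> n)) u"
  by (simp add: block_multiplier_def)

lemma block_multiplier_mult:
  fixes \<alpha> \<alpha>' :: "'a::mult_zero"
  shows "block_multiplier \<alpha> \<beta> u * block_multiplier \<alpha>' \<beta>' u
     = block_multiplier (\<alpha> * \<alpha>') (\<lambda>n. \<beta> n * \<beta>' n) u"
  by (simp add: block_multiplier_def)

lemma norm_block_multiplier_le: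
  fixes \<alpha> :: complex
  assumes "norm \<alpha> \<le> C" and "\<And>n. norm (\<beta> n) \<le> C"
  shows "norm (block_multiplier \<alpha> \<beta> u) \<le> C"
  using assms order_trans[OF norm_ge_zero assms(1)] by (auto simp: block_multiplier_def)

lemma Espace_block_multiplier:
  assumes g: "g \<in> E" and "cmod \<alpha> \<le> C" and "\<And>n. cmod (\<beta> n) \<le> C"
  shows "(\<lambda>u. block_multiplier \<alpha> \<beta> u * g u) \<in> E"
proof -
  have "l2_inner (\<lambda>u. block_multiplier \<alpha> \<beta> u * g u) (lam Ed r q v)
      = \<beta> (depth Ed r v) * l2_inner g (lam Ed r q v)"
    if "v \<in> branching V Ed" for v
    using that by (simp add: l2_inner_lam_eq_sum block_multiplier_Chi sum_distrib_left mult.assoc)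
  moreover have "(\<lambda>u. block_multiplier \<alpha> \<beta> u * g u) \<in> l2space V"
    using g assms(2,3)
    by (intro l2space_mult_bounded norm_block_multiplier_le) (simp_all add: Espace_iff)
  ultimately show ?thesis
    using g by (simp add: Espace_iff)
qed

definition block_diagonal :: "complex \<Rightarrow> (nat \<Rightarrow> complex) \<Rightarrow> ('v \<Rightarrow> complex) \<Rightarrow> 'v \<Rightarrow> complex" where
  "block_diagonal \<alpha> \<beta> g = (\<lambda>u. \<alpha> * P_root r g u +
     (\<Sum>\<^sub>\<infinity>v\<in>branching V Ed. \<beta> (depth Ed r v) * P_block Ed r q v g u))"

lemma block_diagonal_apply:
  assumes g: "g \<in> E"
  shows "block_diagonal \<alpha> \<beta> g = (\<lambda>u. block_multiplier \<alpha> \<beta> u * g u)"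
proof
  fix u
  show "block_diagonal \<alpha> \<beta> g u = block_multiplier \<alpha> \<beta> u * g u"
    using g root_notin_branch_children branch_childrenE[of u]
      P_block_eq_self_iff[OF branch_childrenE, of u g]
    by (auto simp: block_diagonal_def block_multiplier_def infsum_branching_P_block P_root_def
        Espace_iff)
qed

lemma block_diagonal_one: "g \<in> E \<Longrightarrow> block_diagonal 1 (\<lambda>_. 1) g = g"
  by (auto simp: block_diagonal_def Espace_def)

lemma block_diagonal_eq_diff:
  "g \<in> E \<Longrightarrow> block_diagonal \<alpha> \<beta> g = (\<lambda>u. g u - block_diagonal (1 - \<alpha>) (\<lambda>n. 1 - \<beta> n) g u)"
  by (auto simp: block_diagonal_apply block_multiplier_def Espace_iff algebra_simps)

lemma block_diagonal_comp:
  assumes g: "g \<in> E" and "cmod \<alpha> \<le> C" and "\<And>n. cmod (\<beta> n) \<le> C"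
  shows "block_diagonal \<alpha>' \<beta>' (block_diagonal \<alpha> \<beta> g)
           = block_diagonal (\<alpha>' * \<alpha>) (\<lambda>n. \<beta>' n * \<beta> n) g"
  using Espace_block_multiplier[OF assms]
  by (simp add: block_diagonal_apply[OF g] block_diagonal_apply block_multiplier_mult[symmetric]
      mult.assoc)

lemma bounded_op_on_block_diagonal:
  assumes \<alpha>: "cmod \<alpha> \<le> C" and \<beta>: "\<And>n. cmod (\<beta> n) \<le> C"
  shows "bounded_op_on E (block_diagonal \<alpha> \<beta>)"
  unfolding bounded_op_on_def
proof (intro conjI ballI allI impI exI)
  fix g assume g: "g \<in> E"
  show "block_diagonal \<alpha> \<beta> g \<in> E"
    using Espace_block_multiplier[OF g \<alpha> \<beta>] by (simp add: block_diagonal_apply[OF g])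
  have "g \<in> l2space V"
    using g by (simp add: Espace_iff)
  then have "l2_norm (\<lambda>u. block_multiplier \<alpha> \<beta> u * g u) \<le> C * l2_norm g"
    by (rule l2_norm_mult_bounded_le) (rule norm_block_multiplier_le[OF \<alpha> \<beta>])
  then show "l2_norm (block_diagonal \<alpha> \<beta> g) \<le> C * l2_norm g"
    by (simp add: block_diagonal_apply[OF g])
next
  fix a b g h assume "g \<in> E" "h \<in> E"
  then show "block_diagonal \<alpha> \<beta> (\<lambda>u. a * g u + b * h u)
      = (\<lambda>u. a * block_diagonal \<alpha> \<beta> g u + b * block_diagonal \<alpha> \<beta> h u)"
    by (simp add: block_diagonal_apply Espace_lincomb algebra_simps)
qed

lemma invertible_op_on_block_diagonal:
  assumes "\<alpha>' * \<alpha> = 1" and "\<And>n. \<beta>' n * \<beta> n = 1"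
    and "cmod \<alpha> \<le> C" "\<And>n. cmod (\<beta> n) \<le> C" "cmod \<alpha>' \<le> C" "\<And>n. cmod (\<beta>' n) \<le> C"
  shows "invertible_op_on E (block_diagonal \<alpha> \<beta>) (block_diagonal \<alpha>' \<beta>')"
  using assms
  by (simp add: invertible_op_on_def bounded_op_on_block_diagonal block_diagonal_comp
      block_diagonal_one mult.commute)

definition fps_block_diagonal ::
    "real fps \<Rightarrow> (nat \<Rightarrow> real fps) \<Rightarrow> complex \<Rightarrow> ('v \<Rightarrow> complex) \<Rightarrow> 'v \<Rightarrow> complex" where
  "fps_block_diagonal A B x =
     block_diagonal (eval_fps (of_real_fps A) x) (\<lambda>n. eval_fps (of_real_fps (B n)) x)"

lemma bounded_op_on_fps_block_diagonal:
  assumes "\<And>n. \<bar>fps_nth A n\<bar> \<le> 1" and "\<And>m n. \<bar>fps_nth (B m) n\<bar> \<le> 1" and "norm x < 1"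
  shows "bounded_op_on E (fps_block_diagonal A B x)"
  unfolding fps_block_diagonal_def using assms
  by (intro bounded_op_on_block_diagonal[where C = "1 / (1 - norm x)"] norm_eval_of_real_fps_le)

lemma invertible_op_on_fps_block_diagonal:
  assumes A: "pick_fps A" and B: "\<And>n. pick_fps (B n)" and x: "norm x < 1"
  shows "invertible_op_on E (fps_block_diagonal A B x)
           (fps_block_diagonal (inverse A) (\<lambda>n. inverse (B n)) x)"
  unfolding fps_block_diagonal_def
  using pick_fps_eval_inverse[OF A x] pick_fps_eval_inverse[OF B x]
    pick_fps_coeff_bounds[OF A] pick_fps_coeff_bounds[OF B] x
  by (intro invertible_op_on_block_diagonal[where C = "1 / (1 - norm x)"] norm_eval_of_real_fps_le)
     (simp_all add: mult.commute)

lemma fps_block_diagonal_one_minus_inverse: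
  assumes A: "pick_fps A" and B: "\<And>n. pick_fps (B n)" and x: "norm x < 1" and g: "g \<in> E"
  shows "fps_block_diagonal (1 - inverse A) (\<lambda>n. 1 - inverse (B n)) x g
           = (\<lambda>u. g u - fps_block_diagonal (inverse A) (\<lambda>n. inverse (B n)) x g u)"
proof -
  have "1 \<le> fps_conv_radius (inverse A)" "1 \<le> fps_conv_radius (inverse (B n))" for n
    using pick_fps_coeff_bounds[OF A] pick_fps_coeff_bounds[OF B]
    by (simp_all add: fps_conv_radius_ge_1)
  then show ?thesis
    using x block_diagonal_eq_diff[OF g, of "eval_fps (of_real_fps (1 - inverse A)) x"]
    by (simp add: fps_block_diagonal_def eval_of_real_fps_one_minus)
qed

lemma positive_definite_on_fps_block_diagonal:
  assumes "\<And>n. 0 \<le> fps_nth A n \<and> fps_nth A n \<le> 1"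
    and "\<And>m n. 0 \<le> fps_nth (B m) n \<and> fps_nth (B m) n \<le> 1"
  shows "positive_definite_on E (\<lambda>z w. fps_block_diagonal A B (z * cnj w))"
proof (rule positive_definite_on_fps_multiplier[where f = "block_multiplier A B"])
  show "E \<subseteq> l2space V"
    by (auto simp: Espace_iff)
  show "0 \<le> fps_nth (block_multiplier A B u) n \<and> fps_nth (block_multiplier A B u) n \<le> 1"
    for u n
    using assms by (simp add: block_multiplier_def)
  show "fps_block_diagonal A B (z * cnj w) g
      = (\<lambda>u. eval_fps (of_real_fps (block_multiplier A B u)) (z * cnj w) * g u)"
    if "g \<in> E" for z w g
    using that block_multiplier_map[of "\<lambda>f. eval_fps (of_real_fps f) (z * cnj w)"]
    by (simp add: fps_block_diagonal_def block_diagonal_apply)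
qed

theorem fps_block_diagonal_complete_pick:
  fixes A :: "real fps" and B :: "nat \<Rightarrow> real fps"
  assumes A: "pick_fps A" and B: "\<And>n. pick_fps (B n)"
  defines "K z w \<equiv> fps_block_diagonal A B (z * cnj w)"
  shows "(\<forall>z\<in>ball 0 1. \<forall>w\<in>ball 0 1.
            bounded_op_on E (K z w) \<and> (\<exists>G. invertible_op_on E (K z w) G)) \<and>
         (\<exists>F. positive_definite_on E F \<and>
            (\<forall>z\<in>ball 0 1. \<forall>w\<in>ball 0 1. bounded_op_on E (F z w) \<and>
               (\<forall>G. invertible_op_on E (K z w) G \<longrightarrow> (\<forall>g\<in>E. F z w g = (\<lambda>u. g u - G g u)))))"
proof (intro conjI ballI allI impI
    exI[of _ "\<lambda>z w. fps_block_diagonal (1 - inverse A) (\<lambda>n. 1 - inverse (B n)) (z * cnj w)"])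
  fix z w :: complex assume "z \<in> ball 0 1" "w \<in> ball 0 1"
  then have x: "norm (z * cnj w) < 1"
    by (simp add: norm_mult_cnj_less_1)
  show "bounded_op_on E (K z w)"
    unfolding K_def by (intro bounded_op_on_fps_block_diagonal pick_fps_coeff_bounds A B x)
  show "\<exists>G. invertible_op_on E (K z w) G"
    unfolding K_def using invertible_op_on_fps_block_diagonal[where B = B, OF A B x] by blast
  show "bounded_op_on E
          (fps_block_diagonal (1 - inverse A) (\<lambda>n. 1 - inverse (B n)) (z * cnj w))"
    using pick_fps_coeff_bounds[OF A] pick_fps_coeff_bounds[OF B] x
    by (intro bounded_op_on_fps_block_diagonal) (simp_all add: abs_le_iff)
  fix G g assume G: "invertible_op_on E (K z w) G" and g: "g \<in> E"
  have "G g = fps_block_diagonal (inverse A) (\<lambda>n. inverse (B n)) (z * cnj w) g"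
    using G invertible_op_on_fps_block_diagonal[where B = B, OF A B x, folded K_def] g
    by (rule invertible_op_on_unique)
  then show "fps_block_diagonal (1 - inverse A) (\<lambda>n. 1 - inverse (B n)) (z * cnj w) g
      = (\<lambda>u. g u - G g u)"
    by (simp add: fps_block_diagonal_one_minus_inverse[OF A B x g])
next
  show "positive_definite_on E
          (\<lambda>z w. fps_block_diagonal (1 - inverse A) (\<lambda>n. 1 - inverse (B n)) (z * cnj w))"
    using pick_fps_coeff_bounds[OF A] pick_fps_coeff_bounds[OF B]
    by (intro positive_definite_on_fps_block_diagonal) simp_all
qed

end

theorem mainTheorem9:
  fixes V :: "'v set" and Ed :: "('v \<times> 'v) set" and r :: 'v and q :: real
  assumes "rooted_directed_tree V Ed r"
    and "locally_finite_tree V Ed"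
    and "leafless_tree V Ed"
    and "countable V" and "infinite V"
    and "q \<ge> 1"
  shows "(\<forall>z\<in>ball 0 1. \<forall>w\<in>ball 0 1.
            bounded_op_on (Espace V Ed r q) (dirichlet_kernel V Ed r q z w) \<and>
            (\<exists>G. invertible_op_on (Espace V Ed r q) (dirichlet_kernel V Ed r q z w) G)) \<and>
         (\<exists>F. positive_definite_on (Espace V Ed r q) F \<and>
            (\<forall>z\<in>ball 0 1. \<forall>w\<in>ball 0 1.
               bounded_op_on (Espace V Ed r q) (F z w) \<and>
               (\<forall>G. invertible_op_on (Espace V Ed r q) (dirichlet_kernel V Ed r q z w) G \<longrightarrow>
                  (\<forall>g\<in>Espace V Ed r q. F z w g = (\<lambda>u. g u - G g u)))))"
proof -
  interpret tree_dirichlet_space V Ed r q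
    using assms(1,6) by unfold_locales (auto simp: rooted_directed_tree_def)
  define A where "A = Abs_fps (\<lambda>n. pochhammer 1 n / pochhammer q n)"
  define B where
    "B m = Abs_fps (\<lambda>n. pochhammer (real m + 2) n / pochhammer (real m + q + 1) n)" for m :: nat
  have pick: "pick_fps A" "pick_fps (B m)" for m
    using assms(6) unfolding A_def B_def by (auto intro!: pick_fps_pochhammer_ratio)
  have kernel: "dirichlet_kernel V Ed r q z w = fps_block_diagonal A B (z * cnj w)" for z w
    by (rule ext) (simp add: dirichlet_kernel_def fps_block_diagonal_def block_diagonal_def
        k_root_def k_vert_def eval_fps_def of_real_fps_def A_def B_def)
  show ?thesis
    unfolding kernel by (rule fps_block_diagonal_complete_pick) (fact pick)+
qed

end
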